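(* Let $p,q$ be coprime integers with $q>0$ and let $G(p,q)=\langle a,b\mid a^2ba^2b^2a^{-1}b^2,\ m^pl^q\rangle$, where $m=a^{-1}b^{-2}$ and $l=ab^{-1}a^2m^{-18}$. Let $k\in G(p,q)$ be an element with $m=k^q$ and $l=k^{-p}$. Suppose $G(p,q)$ acts on the right on $\mathbb{R}$ by orientation-preserving homeomorphisms, $x\mapsto xg$. If $xk>x$ for all $x\in\mathbb{R}$, then $x>xb$ for all $x\in\mathbb{R}$.
   Context: $G(p,q)$ is the fundamental group of $p/q$-Dehn surgery on the $(-2,3,7)$-pretzel knot, with $m$, $l$ the meridian and longitude. *)

theory Defs
  imports "HOL-Analysis.Analysis"
begin

datatype gen = GA | GB

text \<open>A letter is a generator together with an exponent sign flag (True = inverse).\<close>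
type_synonym letter = "gen \<times> bool"
type_synonym word = "letter list"

definition winv :: "word \<Rightarrow> word" where
  "winv w = rev (map (\<lambda>(g, e). (g, \<not> e)) w)"

definition wpow :: "word \<Rightarrow> int \<Rightarrow> word" where
  "wpow w n = (if 0 \<le> n then concat (replicate (nat n) w)
               else concat (replicate (nat (- n)) (winv w)))"

abbreviation wa :: word where "wa \<equiv> [(GA, False)]"
abbreviation wb :: word where "wb \<equiv> [(GB, False)]"

definition mer :: word where
  "mer = winv wa @ wpow wb (-2)"

definition lon :: word where
  "lon = wa @ winv wb @ wpow wa 2 @ wpow mer (-18)"

definition rel1 :: word where
  "rel1 = wpow wa 2 @ wb @ wpow wa 2 @ wpow wb 2 @ winv wa @ wpow wb 2"

definition rel2 :: "int \<Rightarrow> int \<Rightarrow> word" where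
  "rel2 p q = wpow mer p @ wpow lon q"

text \<open>Equality of words in the group presented by generators a, b and relators R:
  the congruence on words generated by free cancellation and by the relators.\<close>
inductive geq :: "word set \<Rightarrow> word \<Rightarrow> word \<Rightarrow> bool" for R where
  geq_refl: "geq R u u"
| geq_sym: "geq R u v \<Longrightarrow> geq R v u"
| geq_trans: "geq R u v \<Longrightarrow> geq R v w \<Longrightarrow> geq R u w"
| geq_cong: "geq R u v \<Longrightarrow> geq R (x @ u @ y) (x @ v @ y)"
| geq_cancel: "geq R [(g, e), (g, \<not> e)] []"
| geq_rel: "r \<in> R \<Longrightarrow> geq R r []"

definition Geq :: "int \<Rightarrow> int \<Rightarrow> word \<Rightarrow> word \<Rightarrow> bool" where
  "Geq p q u v = geq {rel1, rel2 p q} u v"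

definition orient_pres_homeo :: "(real \<Rightarrow> real) \<Rightarrow> bool" where
  "orient_pres_homeo f \<longleftrightarrow> (\<exists>g. homeomorphism UNIV UNIV f g) \<and> mono f"

text \<open>Right action x \<mapsto> x w of a word, given the homeomorphisms x \<mapsto> x a = fa x and
  x \<mapsto> x b = fb x; so x (g h) = (x g) h.\<close>
fun lact :: "(real \<Rightarrow> real) \<Rightarrow> (real \<Rightarrow> real) \<Rightarrow> letter \<Rightarrow> real \<Rightarrow> real" where
  "lact fa fb (GA, False) x = fa x"
| "lact fa fb (GA, True) x = inv fa x"
| "lact fa fb (GB, False) x = fb x"
| "lact fa fb (GB, True) x = inv fb x"

fun wact :: "(real \<Rightarrow> real) \<Rightarrow> (real \<Rightarrow> real) \<Rightarrow> real \<Rightarrow> word \<Rightarrow> real" where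
  "wact fa fb x [] = x"
| "wact fa fb x (c # w) = wact fa fb (lact fa fb c x) w"

text \<open>A right action of G(p,q) on R by orientation-preserving homeomorphisms is
  determined by the actions of a and b, which must be orientation-preserving
  homeomorphisms under which both relators act trivially.\<close>
definition G_right_action :: "int \<Rightarrow> int \<Rightarrow> (real \<Rightarrow> real) \<Rightarrow> (real \<Rightarrow> real) \<Rightarrow> bool" where
  "G_right_action p q fa fb \<longleftrightarrow>
     orient_pres_homeo fa \<and> orient_pres_homeo fb \<and>
     (\<forall>x. wact fa fb x rel1 = x) \<and> (\<forall>x. wact fa fb x (rel2 p q) = x)"

end

theory Submission
  imports Defs
begin

text \<open>Since m = k^q with q > 0 and k moves every point up, so does m = a^-1 b^-2,
  while its inverse b^2 a moves every point down. The first relator gives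
  a^-1 b a^2 = a^-2 m a^2 m, a product of conjugates of m, so a^-1 b a^2 moves every
  point up too. Hence x b^2 a^2 < x a < x b a^2, so x b^2 < x b, that is x b < x.\<close>

lemma orient_pres_homeo_bij:
  assumes "orient_pres_homeo f"
  shows "bij f"
proof -
  obtain g where "homeomorphism UNIV UNIV f g"
    using assms unfolding orient_pres_homeo_def by blast
  then have "g \<circ> f = id" "f \<circ> g = id"
    unfolding homeomorphism_def by auto
  then show ?thesis by (rule o_bij)
qed

lemma orient_pres_homeo_strict_mono:
  assumes "orient_pres_homeo f"
  shows "strict_mono f"
  using assms orient_pres_homeo_bij[OF assms] unfolding orient_pres_homeo_def
  by (auto intro: mono_imp_strict_mono dest: bij_is_inj)

lemma wact_append: "wact fa fb x (u @ v) = wact fa fb (wact fa fb x u) v"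
  by (induction u arbitrary: x) auto

lemma winv_Cons: "winv (c # w) = winv w @ winv [c]"
  by (simp add: winv_def)

lemma winv_winv [simp]: "winv (winv w) = w"
  by (induction w) (auto simp: winv_def)

locale line_action =
  fixes fa fb :: "real \<Rightarrow> real"
  assumes homeo_a: "orient_pres_homeo fa"
    and homeo_b: "orient_pres_homeo fb"
begin

lemma inv_cancel [simp]:
  "fa (inv fa x) = x" "inv fa (fa x) = x" "fb (inv fb x) = x" "inv fb (fb x) = x"
  using orient_pres_homeo_bij[OF homeo_a] orient_pres_homeo_bij[OF homeo_b]
  by (simp_all add: bij_is_inj bij_is_surj surj_f_inv_f)

lemma lact_inverse: "lact fa fb (g, \<not> e) (lact fa fb (g, e) x) = x"
  by (cases g; cases e) simp_all

lemma strict_mono_lact: "strict_mono (lact fa fb c)"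
proof -
  have "strict_mono fa" "strict_mono fb"
    using homeo_a homeo_b by (simp_all add: orient_pres_homeo_strict_mono)
  moreover have "strict_mono (inv fa)" "strict_mono (inv fb)"
    using calculation orient_pres_homeo_bij[OF homeo_a] orient_pres_homeo_bij[OF homeo_b]
      strict_mono_inv[of fa "inv fa"] strict_mono_inv[of fb "inv fb"]
    by (simp_all add: bij_is_surj)
  moreover obtain g e where "c = (g, e)"
    by fastforce
  ultimately show ?thesis
    by (cases g; cases e) (simp_all add: strict_mono_def)
qed

lemma wact_less_iff [simp]: "wact fa fb x w < wact fa fb y w \<longleftrightarrow> x < y"
proof (induction w arbitrary: x y)
  case (Cons c w)
  then show ?case
    using strict_mono_lact[of c] by (simp add: strict_mono_less)
qed simp

lemma wact_winv_right [simp]: "wact fa fb (wact fa fb x w) (winv w) = x"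
proof (induction w arbitrary: x)
  case (Cons c w)
  obtain g e where "c = (g, e)" by fastforce
  then show ?case
    using Cons.IH by (simp add: winv_Cons wact_append winv_def lact_inverse)
qed (simp add: winv_def)

lemma wact_winv_left [simp]: "wact fa fb (wact fa fb x (winv w)) w = x"
  using wact_winv_right[of x "winv w"] by simp

lemma geq_wact:
  assumes "geq R u v" and "\<And>r x. r \<in> R \<Longrightarrow> wact fa fb x r = x"
  shows "wact fa fb x u = wact fa fb x v"
  using assms(1)
proof (induction arbitrary: x rule: geq.induct)
  case (geq_cong u v x' y)
  then show ?case by (simp add: wact_append)
next
  case (geq_cancel g e)
  then show ?case by (simp add: lact_inverse)
next
  case (geq_rel r)
  then show ?case using assms(2) by simp
qed auto

definition positive :: "word \<Rightarrow> bool" where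
  "positive w \<longleftrightarrow> (\<forall>x. x < wact fa fb x w)"

lemma positive_cong:
  "positive u \<Longrightarrow> (\<And>x. wact fa fb x u = wact fa fb x v) \<Longrightarrow> positive v"
  by (simp add: positive_def)

lemma positive_append: "positive u \<Longrightarrow> positive v \<Longrightarrow> positive (u @ v)"
  unfolding positive_def wact_append by (meson less_trans)

lemma positive_power: "positive w \<Longrightarrow> 0 < n \<Longrightarrow> positive (concat (replicate n w))"
proof (induction n)
  case (Suc n)
  then show ?case by (cases n) (simp_all add: positive_append)
qed simp

lemma positive_wpow: "positive w \<Longrightarrow> 0 < n \<Longrightarrow> positive (wpow w n)"
  by (simp add: wpow_def positive_power)

lemma positive_conj: "positive w \<Longrightarrow> positive (winv u @ w @ u)"
  unfolding positive_def wact_append by (metis wact_less_iff wact_winv_left)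

lemma positive_winv: "positive w \<Longrightarrow> wact fa fb x (winv w) < x"
  unfolding positive_def by (metis wact_winv_left)

lemma wact_wb_less:
  assumes rel1: "\<And>x. wact fa fb x rel1 = x" and m: "positive mer"
  shows "wact fa fb x wb < x"
proof -
  \<comment> \<open>a^-2 m a^2 m reduces freely to a^-3 (b^-2 a b^-2), and so does a^-3 rel1 (b^-2 a b^-2)
    to a^-1 b a^2\<close>
  have "wact fa fb y (winv (wa @ wa) @ mer @ (wa @ wa) @ mer)
      = wact fa fb (wact fa fb (wact fa fb y (winv (wa @ wa @ wa))) rel1)
          (wpow wb (-2) @ wa @ wpow wb (-2))" for y
    by (simp add: rel1 mer_def winv_def wpow_def numeral_2_eq_2 wact_append)
  also have "\<dots> y = wact fa fb y (winv wa @ wb @ wa @ wa)" for y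
    by (simp add: rel1_def winv_def wpow_def numeral_2_eq_2 wact_append)
  finally have relator: "wact fa fb y (winv (wa @ wa) @ mer @ (wa @ wa) @ mer)
      = wact fa fb y (winv wa @ wb @ wa @ wa)" for y .
  have "positive (winv (wa @ wa) @ mer @ (wa @ wa) @ mer)"
    using positive_append[OF positive_conj[OF m, of "wa @ wa"] m] by simp
  then have up: "positive (winv wa @ wb @ wa @ wa)"
    using relator by (rule positive_cong)
  have "wact fa fb x (wb @ wb @ wa) < x"
    using positive_winv[OF m, of x] by (simp add: mer_def winv_def wpow_def numeral_2_eq_2)
  then have "wact fa fb (wact fa fb x (wb @ wb @ wa)) wa < wact fa fb x wa"
    by (simp only: wact_less_iff)
  also have "\<dots> < wact fa fb x (wb @ wa @ wa)"
    using up[unfolded positive_def, rule_format, of "wact fa fb x wa"]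
    by (simp only: wact_append wact_winv_right)
  finally have "wact fa fb (wact fa fb (wact fa fb x wb) wb) (wa @ wa)
      < wact fa fb (wact fa fb x wb) (wa @ wa)"
    by (simp del: wact_less_iff)
  then show ?thesis by (simp only: wact_less_iff)
qed

end

lemma G_right_action_line_action: "G_right_action p q fa fb \<Longrightarrow> line_action fa fb"
  by unfold_locales (simp_all add: G_right_action_def)

lemma G_right_action_wact_eq:
  assumes "G_right_action p q fa fb" and "Geq p q u v"
  shows "wact fa fb x u = wact fa fb x v"
proof -
  interpret line_action fa fb
    using assms(1) by (rule G_right_action_line_action)
  show ?thesis
    using assms unfolding Geq_def G_right_action_def by (auto intro: geq_wact)
qed

theorem mainTheorem8:
  fixes p q :: int and k :: word and fa fb :: "real \<Rightarrow> real"
  assumes "coprime p q" and "q > 0"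
    and "Geq p q mer (wpow k q)"
    and "Geq p q lon (wpow k (- p))"
    and "G_right_action p q fa fb"
    and "\<forall>x. wact fa fb x k > x"
  shows "\<forall>x. x > wact fa fb x wb"
proof -
  interpret line_action fa fb
    using assms(5) by (rule G_right_action_line_action)
  have "positive (wpow k q)"
    using assms(2,6) positive_wpow[of k q] unfolding positive_def by simp
  then have "positive mer"
    using G_right_action_wact_eq[OF assms(5,3)] by (metis positive_cong)
  moreover have "\<And>x. wact fa fb x rel1 = x"
    using assms(5) by (simp add: G_right_action_def)
  ultimately show ?thesis
    using wact_wb_less by blast
qed

end
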